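(* Let $\mathbf G$ be a finite oriented metric graph with Dirac operator data as in the context, let $\Lambda$ be a linear relation in the vertex space $\mathcal F$ and $\overline\Lambda=\{(\overline f,\overline{f'}):(f,f')\in\Lambda\}$ (componentwise complex conjugation). For a linear relation $\Theta$ in $\mathcal F$ let $D^{\Theta_W}$ be the restriction of $D^{max}$ to $\{\Phi\in\widetilde H^1(\mathbf G;\mathbb C^2):(W\Gamma^1\Phi,W\Gamma^2\Phi)\in\Theta\}$. Let $T:\mathscr H\to\mathscr H$ be the antilinear map $T\Phi=(\sigma_3\overline{\phi_j})_{j\in\mathcal J}$. Then $$TD^{\Lambda_W}=D^{\overline\Lambda_W}T.$$ In particular, $D^{\Lambda_W}$ and $D^{\overline\Lambda_W}$ are (antilinearly) similar.
   Context: Let $m\ge0$. A finite oriented metric graph $\mathbf G$ has a finite nonempty vertex set $\mathcal V$, finite sets $\mathcal I$ (internal) and $\mathcal E$ (external) of edges, $\mathcal J=\mathcal I\cup\mathcal E\ne\emptyset$, no loops. Each internal edge $i$ has initial vertex $\partial_-i$ and terminal vertex $\partial_+i$ and is identified with $I_i=(a_i,b_i)$, $a_i\leftrightarrow\partial_-i$, $b_i\leftrightarrow\partial_+i$. An external edge $e$ attached to a vertex is identified with $(a_e,+\infty)$ ($\rho(e)=-1$) or $(-\infty,b_e)$ ($\rho(e)=1$); $\partial e$ is the finite endpoint. $\mathscr H=\bigoplus_jL^2(I_j;\mathbb C^2)$, $\widetilde H^1(\mathbf G;\mathbb C^2)=\bigoplus_jH^1(I_j;\mathbb C^2)$, $\Phi=(\phi_j)_j$,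 $\phi_j=(\phi_j^1,\phi_j^2)^T$; $D^{max}$ acts edgewise by $-i\sigma_1\phi_j'+m\sigma_3\phi_j$ ($\sigma_1=\begin{pmatrix}0&1\\1&0\end{pmatrix}$, $\sigma_3=\operatorname{diag}(1,-1)$). $\mathcal G=\bigoplus_j\mathcal G_j$, $\mathcal G_i=\mathbb C^2$, $\mathcal G_e=\mathbb C$; $\Gamma^k=\bigoplus_j\Gamma^k_j$, $\Gamma^1_i\Phi=(\phi_i^1(a_i),\phi_i^1(b_i))^T$, $\Gamma^2_i\Phi=(i\phi_i^2(a_i),-i\phi_i^2(b_i))^T$, $\Gamma^1_e\Phi=\phi_e^1(\partial e)$, $\Gamma^2_e\Phi=-i\rho(e)\phi^2_e(\partial e)$. Vertex space $\mathcal F=\bigoplus_v\mathbb C^{\deg v}$. Coordinates of $\mathcal G$ and $\mathcal F$ are labelled by the pairs $(j,v)$, $v$ a vertex endpoint of $j$: in $\mathcal G$ ordered edge by edge (for internal edges the pair with the initial vertex first), in $\mathcal F$ vertex by vertex and within a vertex by the fixed edge order; $W:\mathcal G\to\mathcal F$ is the permutation matrix sending coordinate $(j,v)$ of $\mathcal G$ to coordinate $(j,v)$ of $\mathcal F$. *)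

theory Defs
  imports "HOL-Analysis.Analysis"
begin

text \<open>Internal edge i is the interval
  (left i, right i), left i corresponding to the initial vertex init i and
  right i to the terminal vertex tvert i.  External edge e is attached at att e;
  it is (left e, +infinity) if rho e = -1 and (-infinity, right e) if rho e = 1.\<close>

record ('v, 'e) metric_graph =
  verts :: "'v set"
  int_edges :: "'e set"
  ext_edges :: "'e set"
  init :: "'e \<Rightarrow> 'v"
  tvert :: "'e \<Rightarrow> 'v"
  att :: "'e \<Rightarrow> 'v"
  rho :: "'e \<Rightarrow> int"
  left :: "'e \<Rightarrow> real"
  right :: "'e \<Rightarrow> real"

definition edges :: "('v, 'e) metric_graph \<Rightarrow> 'e set" where
  "edges G = int_edges G \<union> ext_edges G"

definition wf_graph :: "('v, 'e) metric_graph \<Rightarrow> bool" where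
  "wf_graph G \<longleftrightarrow>
     finite (verts G) \<and> verts G \<noteq> {} \<and>
     finite (int_edges G) \<and> finite (ext_edges G) \<and>
     int_edges G \<inter> ext_edges G = {} \<and> edges G \<noteq> {} \<and>
     (\<forall>i\<in>int_edges G. init G i \<in> verts G \<and> tvert G i \<in> verts G \<and>
                        init G i \<noteq> tvert G i \<and> left G i < right G i) \<and>
     (\<forall>e\<in>ext_edges G. att G e \<in> verts G \<and> (rho G e = -1 \<or> rho G e = 1))"

definition edge_interval :: "('v, 'e) metric_graph \<Rightarrow> 'e \<Rightarrow> real set" where
  "edge_interval G j =
     (if j \<in> int_edges G then {left G j <..< right G j}
      else if rho G j = -1 then {left G j <..} else {..< right G j})"

definition ends :: "('v, 'e) metric_graph \<Rightarrow> 'e \<Rightarrow> 'v set" where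
  "ends G j = (if j \<in> int_edges G then {init G j, tvert G j} else {att G j})"

definition incid :: "('v, 'e) metric_graph \<Rightarrow> ('v \<times> 'e) set" where
  "incid G = {(v, j). j \<in> edges G \<and> v \<in> ends G j}"

text \<open>Vertex space F = (+)_v C^(deg v): its coordinates are labelled by the
  incidence pairs (v, j); we represent it as the functions vanishing outside.\<close>
definition vertex_space :: "('v, 'e) metric_graph \<Rightarrow> ('v \<times> 'e \<Rightarrow> complex) set" where
  "vertex_space G = {f. \<forall>p. p \<notin> incid G \<longrightarrow> f p = 0}"

definition linear_relation ::
  "('v, 'e) metric_graph \<Rightarrow> (('v \<times> 'e \<Rightarrow> complex) \<times> ('v \<times> 'e \<Rightarrow> complex)) set \<Rightarrow> bool" where
  "linear_relation G \<Lambda> \<longleftrightarrow>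
     \<Lambda> \<subseteq> vertex_space G \<times> vertex_space G \<and>
     ((\<lambda>_. 0), (\<lambda>_. 0)) \<in> \<Lambda> \<and>
     (\<forall>f f' h h'. (f, f') \<in> \<Lambda> \<longrightarrow> (h, h') \<in> \<Lambda> \<longrightarrow>
        ((\<lambda>p. f p + h p), (\<lambda>p. f' p + h' p)) \<in> \<Lambda>) \<and>
     (\<forall>c f f'. (f, f') \<in> \<Lambda> \<longrightarrow> ((\<lambda>p. c * f p), (\<lambda>p. c * f' p)) \<in> \<Lambda>)"

definition conj_rel ::
  "(('a \<Rightarrow> complex) \<times> ('a \<Rightarrow> complex)) set \<Rightarrow> (('a \<Rightarrow> complex) \<times> ('a \<Rightarrow> complex)) set" where
  "conj_rel \<Lambda> = {((\<lambda>p. cnj (f p)), (\<lambda>p. cnj (f' p))) | f f'. (f, f') \<in> \<Lambda>}"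

text \<open>A function Phi :: 'e => real => complex x complex; Phi j x = (phi_j^1 x, phi_j^2 x).\<close>

definition L2_on :: "real set \<Rightarrow> (real \<Rightarrow> complex \<times> complex) \<Rightarrow> bool" where
  "L2_on I f \<longleftrightarrow> f \<in> borel_measurable (lebesgue_on I) \<and>
                  integrable (lebesgue_on I) (\<lambda>x. (norm (f x))\<^sup>2)"

text \<open>H^1 on an interval, represented by its (absolutely) continuous representative:
  f in L^2 with an L^2 (weak) derivative g, f y - f x = integral of g over [x,y].\<close>
definition is_H1_deriv :: "real set \<Rightarrow> (real \<Rightarrow> complex \<times> complex) \<Rightarrow> (real \<Rightarrow> complex \<times> complex) \<Rightarrow> bool" where
  "is_H1_deriv I f g \<longleftrightarrow> L2_on I f \<and> L2_on I g \<and>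
     (\<forall>x\<in>I. \<forall>y\<in>I. x \<le> y \<longrightarrow> (g has_integral (f y - f x)) {x..y})"

text \<open>Elements of the Hilbert space H = (+)_j L^2(I_j; C^2), extended by zero off I_j.\<close>
definition hilbert_space :: "('v, 'e) metric_graph \<Rightarrow> ('e \<Rightarrow> real \<Rightarrow> complex \<times> complex) set" where
  "hilbert_space G = {\<Phi>. (\<forall>j. j \<notin> edges G \<longrightarrow> (\<forall>x. \<Phi> j x = 0)) \<and>
      (\<forall>j\<in>edges G. L2_on (edge_interval G j) (\<Phi> j) \<and>
                   (\<forall>x. x \<notin> edge_interval G j \<longrightarrow> \<Phi> j x = 0))}"

definition H1_space :: "('v, 'e) metric_graph \<Rightarrow> ('e \<Rightarrow> real \<Rightarrow> complex \<times> complex) set" where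
  "H1_space G = {\<Phi>. \<Phi> \<in> hilbert_space G \<and>
      (\<forall>j\<in>edges G. \<exists>g. is_H1_deriv (edge_interval G j) (\<Phi> j) g)}"

definition val_left :: "(real \<Rightarrow> 'b::t2_space) \<Rightarrow> real \<Rightarrow> 'b" where
  "val_left f a = Lim (at_right a) f"
definition val_right :: "(real \<Rightarrow> 'b::t2_space) \<Rightarrow> real \<Rightarrow> 'b" where
  "val_right f b = Lim (at_left b) f"

definition val_ext :: "('v, 'e) metric_graph \<Rightarrow> 'e \<Rightarrow> (real \<Rightarrow> 'b::t2_space) \<Rightarrow> 'b" where
  "val_ext G e f = (if rho G e = -1 then val_left f (left G e) else val_right f (right G e))"

text \<open>The space G: coordinates labelled by (j, False) (the a_j end / the finite end
  for external edges) and (j, True) (the b_j end of internal edges).\<close>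

definition Gamma1 :: "('v, 'e) metric_graph \<Rightarrow> ('e \<Rightarrow> real \<Rightarrow> complex \<times> complex) \<Rightarrow> ('e \<times> bool \<Rightarrow> complex)" where
  "Gamma1 G \<Phi> = (\<lambda>(j, s).
     if j \<in> int_edges G then
       (if s then val_right (\<lambda>x. fst (\<Phi> j x)) (right G j)
             else val_left (\<lambda>x. fst (\<Phi> j x)) (left G j))
     else if j \<in> ext_edges G \<and> \<not> s then val_ext G j (\<lambda>x. fst (\<Phi> j x))
     else 0)"

definition Gamma2 :: "('v, 'e) metric_graph \<Rightarrow> ('e \<Rightarrow> real \<Rightarrow> complex \<times> complex) \<Rightarrow> ('e \<times> bool \<Rightarrow> complex)" where
  "Gamma2 G \<Phi> = (\<lambda>(j, s).
     if j \<in> int_edges G then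
       (if s then - \<i> * val_right (\<lambda>x. snd (\<Phi> j x)) (right G j)
             else \<i> * val_left (\<lambda>x. snd (\<Phi> j x)) (left G j))
     else if j \<in> ext_edges G \<and> \<not> s then
       - \<i> * of_int (rho G j) * val_ext G j (\<lambda>x. snd (\<Phi> j x))
     else 0)"

definition Wmap :: "('v, 'e) metric_graph \<Rightarrow> ('e \<times> bool \<Rightarrow> complex) \<Rightarrow> ('v \<times> 'e \<Rightarrow> complex)" where
  "Wmap G g = (\<lambda>(v, j).
     if j \<in> int_edges G then
       (if v = init G j then g (j, False) else if v = tvert G j then g (j, True) else 0)
     else if j \<in> ext_edges G \<and> v = att G j then g (j, False)
     else 0)"

text \<open>Edgewise action -i sigma_1 phi' + m sigma_3 phi, with phi' = g.\<close>
definition dirac_action :: "real \<Rightarrow> complex \<times> complex \<Rightarrow> complex \<times> complex \<Rightarrow> complex \<times> complex" where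
  "dirac_action m \<phi> g = (- \<i> * snd g + of_real m * fst \<phi>, - \<i> * fst g - of_real m * snd \<phi>)"

text \<open>Since D Phi is an
  L^2 class, the graph contains every representative Psi (zero off the edges).\<close>
definition dirac_rel ::
  "('v, 'e) metric_graph \<Rightarrow> real \<Rightarrow> (('v \<times> 'e \<Rightarrow> complex) \<times> ('v \<times> 'e \<Rightarrow> complex)) set
   \<Rightarrow> (('e \<Rightarrow> real \<Rightarrow> complex \<times> complex) \<times> ('e \<Rightarrow> real \<Rightarrow> complex \<times> complex)) set" where
  "dirac_rel G m \<Theta> = {(\<Phi>, \<Psi>). \<Phi> \<in> H1_space G \<and>
      (Wmap G (Gamma1 G \<Phi>), Wmap G (Gamma2 G \<Phi>)) \<in> \<Theta> \<and>
      (\<forall>j. j \<notin> edges G \<longrightarrow> (\<forall>x. \<Psi> j x = 0)) \<and>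
      (\<forall>j\<in>edges G. (\<forall>x. x \<notin> edge_interval G j \<longrightarrow> \<Psi> j x = 0) \<and>
         (\<exists>g. is_H1_deriv (edge_interval G j) (\<Phi> j) g \<and>
              (\<forall>x\<in>edge_interval G j. \<Psi> j x = dirac_action m (\<Phi> j x) (g x))))}"

definition Tmap :: "('e \<Rightarrow> real \<Rightarrow> complex \<times> complex) \<Rightarrow> ('e \<Rightarrow> real \<Rightarrow> complex \<times> complex)" where
  "Tmap \<Phi> = (\<lambda>j x. (cnj (fst (\<Phi> j x)), - cnj (snd (\<Phi> j x))))"

end

theory Submission
  imports Defs
begin

(* Since \<sigma>\<^sub>3 anticommutes with \<sigma>\<^sub>1 and conjugation
   flips the sign of i, T commutes with the differential expression -i\<sigma>\<^sub>1 d/dx + m\<sigma>\<^sub>3, and it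
   preserves H^1.  On boundary values Gamma^k (T \<Phi>) = conj (Gamma^k \<Phi>) for k = 1, 2: for
   Gamma^2 the sign of \<sigma>\<^sub>3 is absorbed by the factor \<plusminus>i.  W is a real permutation, so
   T maps the graph of D^{\<Lambda>_W} into that of D^{conj \<Lambda>_W}, and onto it because T and
   \<Lambda> \<mapsto> conj \<Lambda> are involutions.  Boundary values are one-sided limits (Lim, i.e. THE),
   so commuting them with conjugation needs their existence: an L^2 derivative is
   integrable on bounded intervals. *)

definition sigma3_cnj :: "complex \<times> complex \<Rightarrow> complex \<times> complex" where
  "sigma3_cnj z = (cnj (fst z), - cnj (snd z))"

lemma sigma3_cnj_sigma3_cnj [simp]: "sigma3_cnj (sigma3_cnj z) = z"
  by (simp add: sigma3_cnj_def)

lemma norm_sigma3_cnj [simp]: "norm (sigma3_cnj z) = norm z"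
  by (cases z) (simp add: sigma3_cnj_def norm_Pair)

lemma sigma3_cnj_eq_0_iff [simp]: "sigma3_cnj z = 0 \<longleftrightarrow> z = 0"
  by (cases z) (auto simp: sigma3_cnj_def zero_prod_def)

lemma bounded_linear_sigma3_cnj: "bounded_linear sigma3_cnj"
  unfolding sigma3_cnj_def[abs_def]
  by (intro bounded_linear_Pair bounded_linear_compose[OF bounded_linear_cnj]
      bounded_linear_minus bounded_linear_fst bounded_linear_snd)

lemma dirac_action_sigma3_cnj:
  "dirac_action m (sigma3_cnj \<phi>) (sigma3_cnj g) = sigma3_cnj (dirac_action m \<phi> g)"
  by (simp add: dirac_action_def sigma3_cnj_def)

lemma Tmap_eq: "Tmap \<Phi> = (\<lambda>j x. sigma3_cnj (\<Phi> j x))"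
  by (simp add: Tmap_def sigma3_cnj_def)

lemma Tmap_Tmap [simp]: "Tmap (Tmap \<Phi>) = \<Phi>"
  by (simp add: Tmap_eq)

lemma L2_on_sigma3_cnj:
  assumes "L2_on I f" shows "L2_on I (\<lambda>x. sigma3_cnj (f x))"
proof -
  have "continuous_on UNIV sigma3_cnj"
    using bounded_linear_sigma3_cnj linear_continuous_on by blast
  then show ?thesis
    using assms borel_measurable_continuous_on unfolding L2_on_def by auto
qed

lemma is_H1_deriv_sigma3_cnj:
  assumes "is_H1_deriv I f g"
  shows "is_H1_deriv I (\<lambda>x. sigma3_cnj (f x)) (\<lambda>x. sigma3_cnj (g x))"
proof -
  have "((\<lambda>t. sigma3_cnj (g t)) has_integral sigma3_cnj (f y) - sigma3_cnj (f x)) {x..y}"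
    if "x \<in> I" "y \<in> I" "x \<le> y" for x y
    using that assms has_integral_linear[OF _ bounded_linear_sigma3_cnj, of g "f y - f x"]
      linear_diff[OF bounded_linear.linear[OF bounded_linear_sigma3_cnj]]
    unfolding is_H1_deriv_def o_def by auto
  then show ?thesis
    using assms L2_on_sigma3_cnj unfolding is_H1_deriv_def by blast
qed

lemma Tmap_H1_space:
  assumes "\<Phi> \<in> H1_space G" shows "Tmap \<Phi> \<in> H1_space G"
proof -
  have "\<exists>g. is_H1_deriv (edge_interval G j) (Tmap \<Phi> j) g" if "j \<in> edges G" for j
    using assms that is_H1_deriv_sigma3_cnj unfolding H1_space_def Tmap_eq by blast
  moreover have "Tmap \<Phi> \<in> hilbert_space G"
    using assms L2_on_sigma3_cnj unfolding H1_space_def hilbert_space_def Tmap_eq by auto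
  ultimately show ?thesis
    unfolding H1_space_def by blast
qed

lemma L2_on_integrable_on_Icc:
  fixes g :: "real \<Rightarrow> complex \<times> complex"
  assumes g: "L2_on I g" and I: "I \<in> sets lebesgue" and sub: "{a<..<b} \<subseteq> I"
  shows "g integrable_on {a..b}"
proof -
  let ?S = "{a<..<b}"
  have S: "?S \<in> sets lebesgue" by simp
  interpret finite_measure "lebesgue_on ?S"
    by (rule finite_measure_lebesgue_on) simp
  have meas: "g \<in> borel_measurable (lebesgue_on ?S)"
    using g unfolding L2_on_def by (intro measurable_restrict_mono[OF _ sub]) simp
  have "(\<lambda>x. (norm (g x))\<^sup>2) integrable_on I"
    using g I unfolding L2_on_def by (intro integrable_on_lebesgue_on) simp_all
  then have "(\<lambda>x. (norm (g x))\<^sup>2) absolutely_integrable_on I"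
    by (rule nonnegative_absolutely_integrable_1) simp
  then have "integrable (lebesgue_on ?S) (\<lambda>x. (norm (g x))\<^sup>2)"
    using S sub by (meson absolutely_integrable_imp_integrable set_integrable_subset)
  then have "integrable (lebesgue_on ?S) (\<lambda>x. norm (g x))"
    by (rule square_integrable_imp_integrable[OF measurable_compose[OF meas borel_measurable_norm]])
  then have "integrable (lebesgue_on ?S) g"
    using meas integrable_norm_iff by blast
  then show ?thesis
    using integrable_on_lebesgue_on[OF _ S] integrable_on_open_interval_real by blast
qed

lemma is_H1_deriv_tendsto_at_right:
  fixes f g :: "real \<Rightarrow> complex \<times> complex"
  assumes H: "is_H1_deriv I f g" and I: "I \<in> sets lebesgue" and sub: "{a<..<d} \<subseteq> I"
    and "a < d"
  shows "\<exists>L. (f \<longlongrightarrow> L) (at_right a)"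
proof -
  define c where "c = (a + d) / 2"
  have c: "a < c" "c < d" "c \<in> I"
    using \<open>a < d\<close> sub by (auto simp: c_def)
  have "g integrable_on {a..c}"
    using H c sub unfolding is_H1_deriv_def by (intro L2_on_integrable_on_Icc[OF _ I]) auto
  then have "continuous_on {a..c} (\<lambda>x. integral {x..c} g)"
    by (rule indefinite_integral_continuous_1')
  then have lim: "((\<lambda>x. f c - integral {x..c} g) \<longlongrightarrow> f c - integral {a..c} g) (at_right a)"
    using continuous_on_Icc_at_rightD c(1) by (intro tendsto_intros) auto
  have "\<forall>\<^sub>F x in at_right a. f c - integral {x..c} g = f x"
  proof (rule eventually_at_rightI[OF _ c(1)])
    fix x assume "x \<in> {a<..<c}"
    then have "x \<in> I" using sub c by auto
    then have "(g has_integral (f c - f x)) {x..c}"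
      using H c \<open>x \<in> {a<..<c}\<close> unfolding is_H1_deriv_def by auto
    then show "f c - integral {x..c} g = f x" by (simp add: integral_unique)
  qed
  then show ?thesis using Lim_transform_eventually[OF lim] by blast
qed

lemma is_H1_deriv_tendsto_at_left:
  fixes f g :: "real \<Rightarrow> complex \<times> complex"
  assumes H: "is_H1_deriv I f g" and I: "I \<in> sets lebesgue" and sub: "{a<..<d} \<subseteq> I"
    and "a < d"
  shows "\<exists>L. (f \<longlongrightarrow> L) (at_left d)"
proof -
  define c where "c = (a + d) / 2"
  have c: "a < c" "c < d" "c \<in> I"
    using \<open>a < d\<close> sub by (auto simp: c_def)
  have "g integrable_on {c..d}"
    using H c sub unfolding is_H1_deriv_def by (intro L2_on_integrable_on_Icc[OF _ I]) auto
  then have "continuous_on {c..d} (\<lambda>x. integral {c..x} g)"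
    by (rule indefinite_integral_continuous_1)
  then have lim: "((\<lambda>x. f c + integral {c..x} g) \<longlongrightarrow> f c + integral {c..d} g) (at_left d)"
    using continuous_on_Icc_at_leftD c(2) by (intro tendsto_intros) auto
  have "\<forall>\<^sub>F x in at_left d. f c + integral {c..x} g = f x"
  proof (rule eventually_at_leftI[OF _ c(2)])
    fix x assume "x \<in> {c<..<d}"
    then have "x \<in> I" "c \<le> x" using sub c by auto
    then have "(g has_integral (f x - f c)) {c..x}"
      using H c unfolding is_H1_deriv_def by auto
    then show "f c + integral {c..x} g = f x" by (simp add: integral_unique)
  qed
  then show ?thesis using Lim_transform_eventually[OF lim] by blast
qed

lemma H1_space_tendsto_at_ends:
  assumes "\<Phi> \<in> H1_space G" "j \<in> edges G" "{a<..<b} \<subseteq> edge_interval G j" "a < b"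
  shows "\<exists>L. (\<Phi> j \<longlongrightarrow> L) (at_right a)" and "\<exists>L. (\<Phi> j \<longlongrightarrow> L) (at_left b)"
proof -
  obtain g where "is_H1_deriv (edge_interval G j) (\<Phi> j) g"
    using assms(1,2) unfolding H1_space_def by blast
  moreover have "edge_interval G j \<in> sets lebesgue"
    unfolding edge_interval_def by auto
  ultimately show "\<exists>L. (\<Phi> j \<longlongrightarrow> L) (at_right a)" "\<exists>L. (\<Phi> j \<longlongrightarrow> L) (at_left b)"
    using assms(3,4) is_H1_deriv_tendsto_at_right is_H1_deriv_tendsto_at_left by blast+
qed

lemma Lim_sigma3_cnj_components:
  fixes f :: "'a \<Rightarrow> complex \<times> complex"
  assumes "\<exists>L. (f \<longlongrightarrow> L) F" and "F \<noteq> bot"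
  shows "Lim F (\<lambda>x. cnj (fst (f x))) = cnj (Lim F (\<lambda>x. fst (f x)))"
    and "Lim F (\<lambda>x. - cnj (snd (f x))) = - cnj (Lim F (\<lambda>x. snd (f x)))"
proof -
  obtain L where L: "(f \<longlongrightarrow> L) F" using assms(1) by blast
  have "((\<lambda>x. fst (f x)) \<longlongrightarrow> fst L) F" using L by (intro tendsto_intros)
  moreover have "((\<lambda>x. cnj (fst (f x))) \<longlongrightarrow> cnj (fst L)) F" using L by (intro tendsto_intros)
  ultimately show "Lim F (\<lambda>x. cnj (fst (f x))) = cnj (Lim F (\<lambda>x. fst (f x)))"
    using assms(2) by (simp add: tendsto_Lim)
  have "((\<lambda>x. snd (f x)) \<longlongrightarrow> snd L) F" using L by (intro tendsto_intros)
  moreover have "((\<lambda>x. - cnj (snd (f x))) \<longlongrightarrow> - cnj (snd L)) F" using L by (intro tendsto_intros)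
  ultimately show "Lim F (\<lambda>x. - cnj (snd (f x))) = - cnj (Lim F (\<lambda>x. snd (f x)))"
    using assms(2) by (simp add: tendsto_Lim)
qed

lemma H1_space_tendsto_at_vertices:
  assumes wf: "wf_graph G" and \<Phi>: "\<Phi> \<in> H1_space G"
  shows "j \<in> int_edges G \<or> j \<in> ext_edges G \<and> rho G j = -1 \<Longrightarrow>
           \<exists>L. (\<Phi> j \<longlongrightarrow> L) (at_right (left G j))"
    and "j \<in> int_edges G \<or> j \<in> ext_edges G \<and> rho G j \<noteq> -1 \<Longrightarrow>
           \<exists>L. (\<Phi> j \<longlongrightarrow> L) (at_left (right G j))"
proof -
  have int_lr: "left G j < right G j" if "j \<in> int_edges G"
    using wf that unfolding wf_graph_def by blast
  show "\<exists>L. (\<Phi> j \<longlongrightarrow> L) (at_right (left G j))"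
    if j: "j \<in> int_edges G \<or> j \<in> ext_edges G \<and> rho G j = -1"
  proof -
    obtain b where "left G j < b" "{left G j<..<b} \<subseteq> edge_interval G j"
    proof (cases "j \<in> int_edges G")
      case True
      with int_lr show ?thesis by (intro that[of "right G j"]) (auto simp: edge_interval_def)
    next
      case False
      with j show ?thesis by (intro that[of "left G j + 1"]) (auto simp: edge_interval_def)
    qed
    with j show ?thesis
      by (intro H1_space_tendsto_at_ends(1)[OF \<Phi>]) (auto simp: edges_def)
  qed
  show "\<exists>L. (\<Phi> j \<longlongrightarrow> L) (at_left (right G j))"
    if j: "j \<in> int_edges G \<or> j \<in> ext_edges G \<and> rho G j \<noteq> -1"
  proof -
    obtain a where "a < right G j" "{a<..<right G j} \<subseteq> edge_interval G j"
    proof (cases "j \<in> int_edges G")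
      case True
      with int_lr show ?thesis by (intro that[of "left G j"]) (auto simp: edge_interval_def)
    next
      case False
      with j show ?thesis by (intro that[of "right G j - 1"]) (auto simp: edge_interval_def)
    qed
    with j show ?thesis
      by (intro H1_space_tendsto_at_ends(2)[OF \<Phi>]) (auto simp: edges_def)
  qed
qed

lemma Gamma_Tmap:
  assumes "wf_graph G" and "\<Phi> \<in> H1_space G"
  shows "Gamma1 G (Tmap \<Phi>) = (\<lambda>p. cnj (Gamma1 G \<Phi> p))"
    and "Gamma2 G (Tmap \<Phi>) = (\<lambda>p. cnj (Gamma2 G \<Phi> p))"
  using H1_space_tendsto_at_vertices[OF assms]
  by (auto simp: Gamma1_def Gamma2_def val_left_def val_right_def val_ext_def Tmap_def
      Lim_sigma3_cnj_components)

lemma Wmap_cnj: "Wmap G (\<lambda>p. cnj (h p)) = (\<lambda>q. cnj (Wmap G h q))"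
  by (auto simp: Wmap_def)

lemma conj_rel_conj_rel [simp]: "conj_rel (conj_rel \<Theta>) = \<Theta>"
  unfolding conj_rel_def by force

lemma cnj_mem_conj_rel:
  "(f, f') \<in> \<Theta> \<Longrightarrow> ((\<lambda>p. cnj (f p)), (\<lambda>p. cnj (f' p))) \<in> conj_rel \<Theta>"
  unfolding conj_rel_def by blast

lemma Tmap_dirac_rel:
  assumes wf: "wf_graph G" and D: "(\<Phi>, \<Psi>) \<in> dirac_rel G m \<Theta>"
  shows "(Tmap \<Phi>, Tmap \<Psi>) \<in> dirac_rel G m (conj_rel \<Theta>)"
proof -
  let ?I = "edge_interval G"
  have \<Phi>: "\<Phi> \<in> H1_space G"
    and bdry: "(Wmap G (Gamma1 G \<Phi>), Wmap G (Gamma2 G \<Phi>)) \<in> \<Theta>"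
    and off_edges: "\<forall>j. j \<notin> edges G \<longrightarrow> (\<forall>x. \<Psi> j x = 0)"
    and on_edges: "\<forall>j\<in>edges G. (\<forall>x. x \<notin> ?I j \<longrightarrow> \<Psi> j x = 0) \<and>
         (\<exists>g. is_H1_deriv (?I j) (\<Phi> j) g \<and> (\<forall>x\<in>?I j. \<Psi> j x = dirac_action m (\<Phi> j x) (g x)))"
    using D by (simp_all add: dirac_rel_def)
  have "(Wmap G (Gamma1 G (Tmap \<Phi>)), Wmap G (Gamma2 G (Tmap \<Phi>))) \<in> conj_rel \<Theta>"
    unfolding Gamma_Tmap[OF wf \<Phi>] Wmap_cnj by (rule cnj_mem_conj_rel[OF bdry])
  moreover have "\<forall>j. j \<notin> edges G \<longrightarrow> (\<forall>x. Tmap \<Psi> j x = 0)"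
    using off_edges by (simp add: Tmap_eq)
  moreover have "(\<forall>x. x \<notin> ?I j \<longrightarrow> Tmap \<Psi> j x = 0) \<and>
      (\<exists>g. is_H1_deriv (?I j) (Tmap \<Phi> j) g \<and>
           (\<forall>x\<in>?I j. Tmap \<Psi> j x = dirac_action m (Tmap \<Phi> j x) (g x)))"
    if "j \<in> edges G" for j
  proof -
    from bspec[OF on_edges that] obtain g where "is_H1_deriv (?I j) (\<Phi> j) g"
      and "\<forall>x\<in>?I j. \<Psi> j x = dirac_action m (\<Phi> j x) (g x)"
      by blast
    with bspec[OF on_edges that] show ?thesis
      by (intro conjI exI[of _ "\<lambda>x. sigma3_cnj (g x)"])
        (simp_all add: Tmap_eq is_H1_deriv_sigma3_cnj dirac_action_sigma3_cnj)
  qed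
  ultimately show ?thesis
    using Tmap_H1_space[OF \<Phi>] unfolding dirac_rel_def by blast
qed

lemma Tmap_mem_dirac_rel_conj_rel_iff:
  assumes "wf_graph G"
  shows "(Tmap \<Phi>, Tmap \<Psi>) \<in> dirac_rel G m (conj_rel \<Theta>) \<longleftrightarrow> (\<Phi>, \<Psi>) \<in> dirac_rel G m \<Theta>"
proof
  assume "(Tmap \<Phi>, Tmap \<Psi>) \<in> dirac_rel G m (conj_rel \<Theta>)"
  from Tmap_dirac_rel[OF assms this] show "(\<Phi>, \<Psi>) \<in> dirac_rel G m \<Theta>" by simp
qed (rule Tmap_dirac_rel[OF assms])

theorem theorem4p14:
  fixes G :: "('v, 'e) metric_graph" and m :: real
    and \<Lambda> :: "(('v \<times> 'e \<Rightarrow> complex) \<times> ('v \<times> 'e \<Rightarrow> complex)) set"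
  assumes "wf_graph G" and "m \<ge> 0" and "linear_relation G \<Lambda>"
  shows "{(\<Phi>, Tmap \<Psi>) | \<Phi> \<Psi>. (\<Phi>, \<Psi>) \<in> dirac_rel G m \<Lambda>}
           = {(\<Phi>, \<Psi>) | \<Phi> \<Psi>. (Tmap \<Phi>, \<Psi>) \<in> dirac_rel G m (conj_rel \<Lambda>)}
       \<and> dirac_rel G m (conj_rel \<Lambda>) = {(Tmap \<Phi>, Tmap \<Psi>) | \<Phi> \<Psi>. (\<Phi>, \<Psi>) \<in> dirac_rel G m \<Lambda>}"
proof
  note T_iff = Tmap_mem_dirac_rel_conj_rel_iff[OF assms(1)]
  have "(Tmap \<Phi>, \<Psi>) \<in> dirac_rel G m (conj_rel \<Lambda>) \<longleftrightarrow> (\<Phi>, Tmap \<Psi>) \<in> dirac_rel G m \<Lambda>"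
    for \<Phi> \<Psi>
    using T_iff[of \<Phi> "Tmap \<Psi>"] by simp
  then show "{(\<Phi>, Tmap \<Psi>) | \<Phi> \<Psi>. (\<Phi>, \<Psi>) \<in> dirac_rel G m \<Lambda>}
          = {(\<Phi>, \<Psi>) | \<Phi> \<Psi>. (Tmap \<Phi>, \<Psi>) \<in> dirac_rel G m (conj_rel \<Lambda>)}"
    by (metis (no_types, lifting) Tmap_Tmap)
  have "(\<Phi>, \<Psi>) \<in> dirac_rel G m (conj_rel \<Lambda>) \<longleftrightarrow> (Tmap \<Phi>, Tmap \<Psi>) \<in> dirac_rel G m \<Lambda>"
    for \<Phi> \<Psi>
    using T_iff[of "Tmap \<Phi>" "Tmap \<Psi>"] by simp
  then show "dirac_rel G m (conj_rel \<Lambda>) = {(Tmap \<Phi>, Tmap \<Psi>) | \<Phi> \<Psi>. (\<Phi>, \<Psi>) \<in> dirac_rel G m \<Lambda>}"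
    by (auto simp: T_iff) (metis Tmap_Tmap)
qed

end
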